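(* Let $\mathfrak g=\bigoplus_{p\in I}V_p$ and $S=\bigcup_{p\in I}S_p$ be a resonant decomposition (so that $\mathfrak G_R=\bigoplus_p S_p\otimes V_p$ is a resonant subalgebra of $S\otimes\mathfrak g$), and let $|T_{A_1}\cdots T_{A_n}|$ be an invariant tensor for $\mathfrak g$. Denote by $\{T_{a_p}\}$ a basis of $V_p$. (i) For arbitrary constants $\alpha_\gamma$, the components $$|T_{(a_{p_1},\alpha_{p_1})}\cdots T_{(a_{p_n},\alpha_{p_n})}|=\alpha_\gamma K_{\alpha_{p_1}\cdots\alpha_{p_n}}{}^{\gamma}|T_{a_{p_1}}\cdots T_{a_{p_n}}|,\qquad \lambda_{\alpha_{p_k}}\in S_{p_k},$$ form an invariant tensor for $\mathfrak G_R$. (ii) If moreover $S$ has a zero element $\lambda_{N+1}=0_S$ with nonzero elements $\lambda_i$, $i=0,\dots,N$, then for arbitrary constants $\alpha_j$ the components $|T_{(a_{p_1},i_{p_1})}\cdots T_{(a_{p_n},i_{p_n})}|=\sum_{j=0}^N\alpha_jK_{i_{p_1}\cdots i_{p_n}}{}^{j}|T_{a_{p_1}}\cdots T_{a_{p_n}}|$, with $\lambda_{i_{p_k}}\in S_{p_k}$ nonzero, form an invariant tensor for the $0_S$-forced algebra of $\mathfrak G_R$.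
   Context: A semigroup is a set with closed associative multiplication; $S$ is finite and abelian; $0_S$ satisfies $0_S\lambda=\lambda0_S=0_S$. For subsets, $S_p\times S_q=\{\lambda_\alpha\lambda_\beta:\lambda_\alpha\in S_p,\lambda_\beta\in S_q\}$. The decomposition is resonant if there are $i_{(p,q)}\subset I$ with $[V_p,V_q]\subset\bigoplus_{r\in i_{(p,q)}}V_r$ and $S_p\times S_q\subset\bigcap_{r\in i_{(p,q)}}S_r$. The $n$-selector $K_{\alpha_1\cdots\alpha_n}{}^{\gamma}$ equals $1$ if $\lambda_{\alpha_1}\cdots\lambda_{\alpha_n}=\lambda_\gamma$, $0$ otherwise. $S\otimes\mathfrak g$ has basis $T_{(A,\alpha)}=\lambda_\alpha T_A$, grading $\mathfrak q(A)$, bracket $[T_{(A,\alpha)},T_{(B,\beta)}]=K_{\alpha\beta}{}^{\gamma}C_{AB}{}^CT_{(C,\gamma)}$; $\mathfrak G_R$ is spanned by $\lambda_\alpha T_{a_p}$ with $\lambda_\alpha\in S_p$. The $0_S$-forced algebra of $\mathfrak G_R$ has basis $T_{(a_p,i)}$ with $\lambda_i\in S_p$ nonzero and bracket $[T_{(a_p,i)},T_{(b_q,j)}]=\sum_{k=0}^NK_{ij}{}^kC_{a_pb_q}{}^{c_r}T_{(c_r,k)}$. Invariance of a rank-$n$ tensor on a Lie superalgebra with structure constants $C_{AB}{}^C$ means $\sum_{p=1}^{n}(-1)^{\mathfrak q(A_0)(\mathfrak q(A_1)+\cdots+\mathfrak q(A_{p-1}))}C_{A_0A_p}{}^{B}|T_{A_1}\cdots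 T_{A_{p-1}}T_BT_{A_{p+1}}\cdots T_{A_n}|=0$ for all indices. *)

theory Defs
  imports Main
begin

text \<open>A Lie superalgebra is given by a (finite) basis type 'A, a grading
  q :: 'A \<Rightarrow> nat with values in {0,1}, and structure constants
  C A B D = C_{AB}^D, so that [T_A,T_B] = sum_D C_{AB}^D T_D.\<close>

definition lie_superalgebra_sc ::
  "('A::finite \<Rightarrow> nat) \<Rightarrow> ('A \<Rightarrow> 'A \<Rightarrow> 'A \<Rightarrow> 'k::field) \<Rightarrow> bool" where
  "lie_superalgebra_sc q C \<longleftrightarrow>
     (\<forall>A. q A \<in> {0,1}) \<and>
     (\<forall>A B D. C A B D \<noteq> 0 \<longrightarrow> q D = (q A + q B) mod 2) \<and>
     (\<forall>A B D. C A B D = - ((-1) ^ (q A * q B)) * C B A D) \<and>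
     (\<forall>A B D F.
        (-1) ^ (q A * q D) * (\<Sum>E\<in>UNIV. C B D E * C A E F)
      + (-1) ^ (q B * q A) * (\<Sum>E\<in>UNIV. C D A E * C B E F)
      + (-1) ^ (q D * q B) * (\<Sum>E\<in>UNIV. C A B E * C D E F) = 0)"

definition invariant_tensor ::
  "'b set \<Rightarrow> ('b \<Rightarrow> nat) \<Rightarrow> ('b \<Rightarrow> 'b \<Rightarrow> 'b \<Rightarrow> 'k::field) \<Rightarrow> nat
    \<Rightarrow> ('b list \<Rightarrow> 'k) \<Rightarrow> bool" where
  "invariant_tensor Bs q C n T \<longleftrightarrow>
     (\<forall>A0\<in>Bs. \<forall>As. length As = n \<longrightarrow> set As \<subseteq> Bs \<longrightarrow>
        (\<Sum>p<n. (-1) ^ (q A0 * (\<Sum>k<p. q (As ! k))) *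
            (\<Sum>B\<in>Bs. C A0 (As ! p) B * T (As[p := B]))) = 0)"

definition abelian_semigroup :: "('s::finite \<Rightarrow> 's \<Rightarrow> 's) \<Rightarrow> bool" where
  "abelian_semigroup m \<longleftrightarrow>
     (\<forall>x y z. m (m x y) z = m x (m y z)) \<and> (\<forall>x y. m x y = m y x)"

fun sg_prod :: "('s \<Rightarrow> 's \<Rightarrow> 's) \<Rightarrow> 's list \<Rightarrow> 's" where
  "sg_prod m [x] = x"
| "sg_prod m (x # y # ys) = m x (sg_prod m (y # ys))"
| "sg_prod m [] = undefined"

definition selector :: "('s \<Rightarrow> 's \<Rightarrow> 's) \<Rightarrow> 's list \<Rightarrow> 's \<Rightarrow> 'k::field" where
  "selector m xs g = (if xs \<noteq> [] \<and> sg_prod m xs = g then 1 else 0)"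

definition is_zero_elem :: "('s \<Rightarrow> 's \<Rightarrow> 's) \<Rightarrow> 's \<Rightarrow> bool" where
  "is_zero_elem m z \<longleftrightarrow> (\<forall>x. m z x = z \<and> m x z = z)"

text \<open>Resonant decomposition: the basis of g is partitioned by part :: 'A => 'p
  (V_p spanned by the T_a with part a = p), Sp p \<subseteq> S, S is the union of the Sp p,
  and there are i(p,q) with [V_p,V_q] \<subseteq> (+)_{r \<in> i(p,q)} V_r and
  S_p x S_q \<subseteq> \<Inter>_{r \<in> i(p,q)} S_r.\<close>

definition resonant ::
  "('s \<Rightarrow> 's \<Rightarrow> 's) \<Rightarrow> ('A \<Rightarrow> 'A \<Rightarrow> 'A \<Rightarrow> 'k::field) \<Rightarrow> ('A \<Rightarrow> 'p)
    \<Rightarrow> ('p \<Rightarrow> 's set) \<Rightarrow> bool" where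
  "resonant m C part Sp \<longleftrightarrow>
     (\<forall>s. \<exists>p. s \<in> Sp p) \<and>
     (\<exists>i :: 'p \<Rightarrow> 'p \<Rightarrow> 'p set.
        (\<forall>a b c. C a b c \<noteq> 0 \<longrightarrow> part c \<in> i (part a) (part b)) \<and>
        (\<forall>p q x y. x \<in> Sp p \<longrightarrow> y \<in> Sp q \<longrightarrow> (\<forall>r\<in>i p q. m x y \<in> Sp r)))"

text \<open>Structure constants of S \<otimes> g on the basis T_{(A,alpha)} = lambda_alpha T_A.\<close>

definition exp_sc ::
  "('s \<Rightarrow> 's \<Rightarrow> 's) \<Rightarrow> ('A \<Rightarrow> 'A \<Rightarrow> 'A \<Rightarrow> 'k::field)
    \<Rightarrow> ('A \<times> 's) \<Rightarrow> ('A \<times> 's) \<Rightarrow> ('A \<times> 's) \<Rightarrow> 'k" where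
  "exp_sc m C X Y Z = selector m [snd X, snd Y] (snd Z) * C (fst X) (fst Y) (fst Z)"

definition resonant_basis :: "('A \<Rightarrow> 'p) \<Rightarrow> ('p \<Rightarrow> 's set) \<Rightarrow> ('A \<times> 's) set" where
  "resonant_basis part Sp = {(a, s). s \<in> Sp (part a)}"

text \<open>Its bracket is [T_(a,i),T_(b,j)] = sum_{k nonzero} K_ij^k C_ab^c T_(c,k), i.e. the
  structure constants exp_sc restricted to this basis.\<close>

definition forced_basis :: "('A \<Rightarrow> 'p) \<Rightarrow> ('p \<Rightarrow> 's set) \<Rightarrow> 's \<Rightarrow> ('A \<times> 's) set" where
  "forced_basis part Sp z = {(a, s). s \<in> Sp (part a) \<and> s \<noteq> z}"

end

theory Submission
  imports Defs
begin

text \<open>The p-th invariance term of the expanded tensor h(lambda_alpha1 ... lambda_alphan) T at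
  T_(a0,s0), acting on T_(ap,sp), puts s0 sp into slot p; as S is abelian, the new product is
  s0 lambda_alpha1 ... lambda_alphan for every p. Hence the invariance sum of the expanded tensor is
  h(s0 lambda_alpha1 ... lambda_alphan) times that of T, which vanishes. Restricting to the resonant
  subalgebra only drops terms with vanishing structure constants, by resonance. For the 0_S-forced
  algebra the dropped terms are those in the 0_S slot; their semigroup product is 0_S, which the sum
  over j excludes, so they vanish too.\<close>

lemma sg_prod_list_update_mult:
  assumes "abelian_semigroup m"
  shows "p < length xs \<Longrightarrow> sg_prod m (xs[p := m s (xs ! p)]) = m s (sg_prod m xs)"
proof (induction xs arbitrary: p)
  case (Cons x xs)
  have assoc: "m (m u v) w = m u (m v w)" and comm: "m u v = m v u" for u v w
    using assms unfolding abelian_semigroup_def by auto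
  show ?case
  proof (cases p)
    case 0
    then show ?thesis by (cases xs) (simp_all add: assoc)
  next
    case (Suc p')
    with Cons.prems have IH: "sg_prod m (xs[p' := m s (xs ! p')]) = m s (sg_prod m xs)"
      by (intro Cons.IH) simp
    from Suc Cons.prems obtain y ys where "xs = y # ys"
      by (cases xs) auto
    moreover from this obtain y' ys' where "xs[p' := m s (xs ! p')] = y' # ys'"
      by (cases p') auto
    ultimately show ?thesis
      using Suc IH by (simp add: assoc[symmetric] comm[of x s])
  qed
qed simp

lemma sg_prod_zero_elem:
  assumes "is_zero_elem m z"
  shows "z \<in> set xs \<Longrightarrow> sg_prod m xs = z"
proof (induction xs)
  case (Cons x xs)
  then show ?case
    using assms unfolding is_zero_elem_def by (cases xs) auto
qed simp

lemma selector_pair: "selector m [x, y] t = (if t = m x y then 1 else 0)"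
  unfolding selector_def by auto

lemma sum_selector:
  fixes G :: "'s::finite set"
  assumes "xs \<noteq> []"
  shows "(\<Sum>\<gamma>\<in>G. \<alpha> \<gamma> * selector m xs \<gamma> * c)
    = (if sg_prod m xs \<in> G then \<alpha> (sg_prod m xs) else 0) * c"
proof -
  have "(\<Sum>\<gamma>\<in>G. \<alpha> \<gamma> * selector m xs \<gamma> * c)
      = (\<Sum>\<gamma>\<in>G. if sg_prod m xs = \<gamma> then \<alpha> \<gamma> * c else 0)"
    using assms by (intro sum.cong) (auto simp: selector_def)
  then show ?thesis
    by simp
qed

lemma sum_selector_zero_elem:
  fixes z :: "'s::finite"
  assumes "is_zero_elem m z" and "z \<in> set xs"
  shows "(\<Sum>j\<in>UNIV - {z}. \<alpha> j * selector m xs j * c) = 0"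
proof -
  from assms(2) have "xs \<noteq> []" by auto
  then show ?thesis
    using sg_prod_zero_elem[OF assms] by (simp add: sum_selector)
qed

lemma invariant_tensor_restrict:
  fixes c :: "'b::finite \<Rightarrow> 'b \<Rightarrow> 'b \<Rightarrow> 'k::field"
  assumes inv: "invariant_tensor UNIV q c n T"
    and outside: "\<And>X As p B. X \<in> Bs \<Longrightarrow> length As = n \<Longrightarrow> set As \<subseteq> Bs \<Longrightarrow> p < n
      \<Longrightarrow> B \<notin> Bs \<Longrightarrow> c X (As ! p) B * T (As[p := B]) = 0"
  shows "invariant_tensor Bs q c n T"
  unfolding invariant_tensor_def
proof (intro ballI allI impI)
  fix X As
  assume X: "X \<in> Bs" and len: "length As = n" and As: "set As \<subseteq> Bs"
  have "(\<Sum>B\<in>Bs. c X (As ! p) B * T (As[p := B]))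
      = (\<Sum>B\<in>UNIV. c X (As ! p) B * T (As[p := B]))"
    if "p < n" for p
    by (rule sum.mono_neutral_left) (use outside[OF X len As that] in auto)
  then show "(\<Sum>p<n. (-1) ^ (q X * (\<Sum>k<p. q (As ! k))) *
      (\<Sum>B\<in>Bs. c X (As ! p) B * T (As[p := B]))) = 0"
    using inv len unfolding invariant_tensor_def by simp
qed

lemma invariant_tensor_expansion:
  fixes C :: "'A::finite \<Rightarrow> 'A \<Rightarrow> 'A \<Rightarrow> 'k::field"
    and m :: "'s::finite \<Rightarrow> 's \<Rightarrow> 's"
  assumes ab: "abelian_semigroup m" and inv: "invariant_tensor UNIV q C n T"
  shows "invariant_tensor UNIV (\<lambda>X. q (fst X)) (exp_sc m C) n
    (\<lambda>Xs. \<Sum>\<gamma>\<in>G. \<alpha> \<gamma> * selector m (map snd Xs) \<gamma> * T (map fst Xs))"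
    (is "invariant_tensor _ _ _ _ ?T'")
  unfolding invariant_tensor_def
proof (intro ballI allI impI)
  fix X0 :: "'A \<times> 's" and Xs :: "('A \<times> 's) list"
  assume len: "length Xs = n"
  obtain a0 s0 where X0: "X0 = (a0, s0)" by fastforce
  define as where "as = map fst Xs"
  define h where "h s = (if s \<in> G then \<alpha> s else 0)" for s
  define P where "P = sg_prod m (map snd Xs)"
  have term_eq: "(\<Sum>B\<in>UNIV. exp_sc m C X0 (Xs ! p) B * ?T' (Xs[p := B]))
      = h (m s0 P) * (\<Sum>b\<in>UNIV. C a0 (as ! p) b * T (as[p := b]))" if p: "p < n" for p
  proof -
    define u where "u = m s0 (snd (Xs ! p))"
    have T'_update: "?T' (Xs[p := (b, u)]) = h (m s0 P) * T (as[p := b])" for b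
    proof -
      have "Xs[p := (b, u)] \<noteq> []"
        using p len by auto
      then have "?T' (Xs[p := (b, u)])
          = h (sg_prod m (map snd (Xs[p := (b, u)]))) * T (map fst (Xs[p := (b, u)]))"
        unfolding h_def by (intro sum_selector) simp
      also have "sg_prod m (map snd (Xs[p := (b, u)])) = m s0 P"
        using sg_prod_list_update_mult[OF ab, of p "map snd Xs" s0] p len
        by (simp add: map_update u_def P_def)
      finally show ?thesis
        by (simp add: as_def map_update)
    qed
    have "(\<Sum>B\<in>UNIV. exp_sc m C X0 (Xs ! p) B * ?T' (Xs[p := B]))
        = (\<Sum>b\<in>UNIV. \<Sum>t\<in>UNIV. exp_sc m C X0 (Xs ! p) (b, t) * ?T' (Xs[p := (b, t)]))"
      by (simp flip: UNIV_Times_UNIV add: sum.cartesian_product')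
    also have "\<dots> = (\<Sum>b\<in>UNIV. C a0 (as ! p) b * ?T' (Xs[p := (b, u)]))"
      using p len
      by (simp add: exp_sc_def selector_pair X0 as_def u_def if_distrib if_distribR cong: if_cong)
    also have "\<dots> = (\<Sum>b\<in>UNIV. h (m s0 P) * (C a0 (as ! p) b * T (as[p := b])))"
      by (simp add: T'_update mult.left_commute)
    finally show ?thesis
      by (simp add: sum_distrib_left)
  qed
  have "(\<Sum>p<n. (-1) ^ (q (fst X0) * (\<Sum>k<p. q (fst (Xs ! k)))) *
        (\<Sum>B\<in>UNIV. exp_sc m C X0 (Xs ! p) B * ?T' (Xs[p := B])))
      = (\<Sum>p<n. h (m s0 P) * ((-1) ^ (q a0 * (\<Sum>k<p. q (as ! k))) *
        (\<Sum>b\<in>UNIV. C a0 (as ! p) b * T (as[p := b]))))"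
  proof (intro sum.cong refl)
    fix p
    assume "p \<in> {..<n}"
    then have p: "p < n" by simp
    with len have "(\<Sum>k<p. q (fst (Xs ! k))) = (\<Sum>k<p. q (as ! k))"
      by (intro sum.cong) (auto simp: as_def)
    with term_eq[OF p] show "(-1) ^ (q (fst X0) * (\<Sum>k<p. q (fst (Xs ! k)))) *
        (\<Sum>B\<in>UNIV. exp_sc m C X0 (Xs ! p) B * ?T' (Xs[p := B]))
      = h (m s0 P) * ((-1) ^ (q a0 * (\<Sum>k<p. q (as ! k))) *
        (\<Sum>b\<in>UNIV. C a0 (as ! p) b * T (as[p := b])))"
      by (simp only: X0 fst_conv mult.left_commute)
  qed
  also have "\<dots> = h (m s0 P) * (\<Sum>p<n. (-1) ^ (q a0 * (\<Sum>k<p. q (as ! k))) *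
        (\<Sum>b\<in>UNIV. C a0 (as ! p) b * T (as[p := b])))"
    by (simp only: sum_distrib_left)
  also have "\<dots> = 0"
  proof -
    have "length as = n" "set as \<subseteq> UNIV"
      using len by (simp_all add: as_def)
    with inv have "(\<Sum>p<n. (-1) ^ (q a0 * (\<Sum>k<p. q (as ! k))) *
        (\<Sum>b\<in>UNIV. C a0 (as ! p) b * T (as[p := b]))) = 0"
      unfolding invariant_tensor_def by blast
    then show ?thesis
      by simp
  qed
  finally show "(\<Sum>p<n. (-1) ^ (q (fst X0) * (\<Sum>k<p. q (fst (Xs ! k)))) *
      (\<Sum>B\<in>UNIV. exp_sc m C X0 (Xs ! p) B * ?T' (Xs[p := B]))) = 0" .
qed

lemma resonant_basis_bracket_closed:
  assumes "resonant m C part Sp"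
    and "X \<in> resonant_basis part Sp" and "Y \<in> resonant_basis part Sp"
    and "exp_sc m C X Y B \<noteq> 0"
  shows "B \<in> resonant_basis part Sp"
  using assms unfolding resonant_def resonant_basis_def exp_sc_def selector_pair
  by (auto split: if_splits prod.splits)

lemma invariant_tensor_resonant_subalgebra:
  fixes C :: "'A::finite \<Rightarrow> 'A \<Rightarrow> 'A \<Rightarrow> 'k::field" and m :: "'s::finite \<Rightarrow> 's \<Rightarrow> 's"
  assumes "resonant m C part Sp"
    and "invariant_tensor UNIV (\<lambda>X. q (fst X)) (exp_sc m C) n T"
  shows "invariant_tensor (resonant_basis part Sp) (\<lambda>X. q (fst X)) (exp_sc m C) n T"
proof (rule invariant_tensor_restrict[OF assms(2)])
  fix X As p B
  assume X: "X \<in> resonant_basis part Sp" and "length As = n"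
    and "set As \<subseteq> resonant_basis part Sp" and "p < n" and B: "B \<notin> resonant_basis part Sp"
  then have "As ! p \<in> resonant_basis part Sp"
    by (metis nth_mem subsetD)
  with X B have "exp_sc m C X (As ! p) B = 0"
    using resonant_basis_bracket_closed[OF assms(1)] by blast
  then show "exp_sc m C X (As ! p) B * T (As[p := B]) = 0"
    by simp
qed

lemma invariant_tensor_forced_algebra:
  fixes C :: "'A::finite \<Rightarrow> 'A \<Rightarrow> 'A \<Rightarrow> 'k::field" and m :: "'s::finite \<Rightarrow> 's \<Rightarrow> 's"
  assumes "resonant m C part Sp"
    and "invariant_tensor UNIV (\<lambda>X. q (fst X)) (exp_sc m C) n T"
    and vanishing: "\<And>Xs. z \<in> set (map snd Xs) \<Longrightarrow> T Xs = 0"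
  shows "invariant_tensor (forced_basis part Sp z) (\<lambda>X. q (fst X)) (exp_sc m C) n T"
proof (rule invariant_tensor_restrict[OF assms(2)])
  fix X As p B
  assume X: "X \<in> forced_basis part Sp z" and "length As = n"
    and "set As \<subseteq> forced_basis part Sp z" and "p < n" and B: "B \<notin> forced_basis part Sp z"
  then have p: "p < length As" and "As ! p \<in> forced_basis part Sp z"
    by (simp, metis nth_mem subsetD)
  show "exp_sc m C X (As ! p) B * T (As[p := B]) = 0"
  proof (cases "exp_sc m C X (As ! p) B = 0")
    case False
    have "X \<in> resonant_basis part Sp" and "As ! p \<in> resonant_basis part Sp"
      using X \<open>As ! p \<in> forced_basis part Sp z\<close>
      unfolding forced_basis_def resonant_basis_def by auto
    then have "B \<in> resonant_basis part Sp"
      using False by (rule resonant_basis_bracket_closed[OF assms(1)])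
    with B have "snd B = z"
      unfolding forced_basis_def resonant_basis_def by auto
    with p have "z \<in> set (map snd (As[p := B]))"
      by (auto simp: set_update_memI)
    then show ?thesis
      by (simp add: vanishing)
  qed simp
qed

theorem mainTheorem6:
  fixes q :: "'A::finite \<Rightarrow> nat"
    and C :: "'A \<Rightarrow> 'A \<Rightarrow> 'A \<Rightarrow> 'k::field"
    and m :: "'s::finite \<Rightarrow> 's \<Rightarrow> 's"
    and part :: "'A \<Rightarrow> 'p"
    and Sp :: "'p \<Rightarrow> 's set"
    and n :: nat
    and T :: "'A list \<Rightarrow> 'k"
  assumes "lie_superalgebra_sc q C"
    and "abelian_semigroup m"
    and "resonant m C part Sp"
    and "invariant_tensor UNIV q C n T"
  shows "(\<forall>\<alpha> :: 's \<Rightarrow> 'k.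
            invariant_tensor (resonant_basis part Sp) (\<lambda>X. q (fst X)) (exp_sc m C) n
              (\<lambda>Xs. \<Sum>\<gamma>\<in>UNIV. \<alpha> \<gamma> * selector m (map snd Xs) \<gamma> * T (map fst Xs)))
       \<and> (\<forall>z. is_zero_elem m z \<longrightarrow>
            (\<forall>\<alpha> :: 's \<Rightarrow> 'k.
              invariant_tensor (forced_basis part Sp z) (\<lambda>X. q (fst X)) (exp_sc m C) n
                (\<lambda>Xs. \<Sum>j\<in>UNIV - {z}. \<alpha> j * selector m (map snd Xs) j * T (map fst Xs))))"
proof (intro conjI allI impI)
  note expanded =
    invariant_tensor_expansion[OF \<open>abelian_semigroup m\<close> \<open>invariant_tensor UNIV q C n T\<close>]
  show "invariant_tensor (resonant_basis part Sp) (\<lambda>X. q (fst X)) (exp_sc m C) n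
      (\<lambda>Xs. \<Sum>\<gamma>\<in>UNIV. \<alpha> \<gamma> * selector m (map snd Xs) \<gamma> * T (map fst Xs))" for \<alpha>
    by (rule invariant_tensor_resonant_subalgebra[OF \<open>resonant m C part Sp\<close> expanded])
  show "invariant_tensor (forced_basis part Sp z) (\<lambda>X. q (fst X)) (exp_sc m C) n
      (\<lambda>Xs. \<Sum>j\<in>UNIV - {z}. \<alpha> j * selector m (map snd Xs) j * T (map fst Xs))"
    if "is_zero_elem m z" for z \<alpha>
    by (rule invariant_tensor_forced_algebra[OF \<open>resonant m C part Sp\<close> expanded])
      (simp add: sum_selector_zero_elem[OF that])
qed

end
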